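(* Let $\Lambda=(\lambda_1,\dots,\lambda_m)\in\mathbb{R}^m$, whose pairwise distinct values are $\eta_1,\dots,\eta_r$ (with multiplicities), and let $B_\Lambda$ be the exponential B-spline $$B_\Lambda=e^{\lambda_1(\cdot)}\chi_{[0,1)}*e^{\lambda_2(\cdot)}\chi_{[0,1)}*\dots*e^{\lambda_m(\cdot)}\chi_{[0,1)}.$$ For $1\le n\le r$ let $D_n$ be the differential operator $D_nf(x)=e^{\eta_n x}\frac{d}{dx}\bigl(e^{-\eta_n x}f(x)\bigr)$. Then there exists $x_0\in\mathbb{R}$ such that $\mathrm ZB_\Lambda(\cdot,\tfrac12)$ is monotone on $[x_0+k,x_0+k+1)$ for all $k\in\mathbb{Z}$, and for each $1\le n\le r$ there exists $y_0\in\mathbb{R}$ such that $D_n\mathrm ZB_\Lambda(\cdot,\tfrac12)$ is monotone on $[y_0+k,y_0+k+1)$ for all $k\in\mathbb{Z}$.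
   Context: The Zak transform is $\mathrm Zf(x,\omega)=\sum_{k\in\mathbb{Z}} f(x+k)e^{-2\pi i k\omega}$; in particular $\mathrm ZB_\Lambda(x,\tfrac12)=\sum_{k\in\mathbb{Z}}(-1)^kB_\Lambda(x+k)$. Here $\chi_{[0,1)}$ is the indicator function of $[0,1)$ and $*$ denotes convolution on $\mathbb{R}$. *)

theory Defs
  imports "HOL-Analysis.Analysis"
begin

definition echi :: "real \<Rightarrow> real \<Rightarrow> real" where
  "echi l x = (if 0 \<le> x \<and> x < 1 then exp (l * x) else 0)"

definition conv :: "(real \<Rightarrow> real) \<Rightarrow> (real \<Rightarrow> real) \<Rightarrow> real \<Rightarrow> real" where
  "conv f g x = integral UNIV (\<lambda>t. f t * g (x - t))"

fun expB :: "real list \<Rightarrow> real \<Rightarrow> real" where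
  "expB [] = (\<lambda>x. 0)"
| "expB [l] = echi l"
| "expB (l # l' # ls) = conv (echi l) (expB (l' # ls))"

definition zak_half :: "(real \<Rightarrow> real) \<Rightarrow> real \<Rightarrow> real" where
  "zak_half f x = (\<Sum>\<^sub>\<infinity>k\<in>(UNIV::int set). (-1) powi k * f (x + of_int k))"

text \<open>Right derivative (the functions involved are right-continuous piecewise smooth).\<close>
definition rderiv :: "(real \<Rightarrow> real) \<Rightarrow> real \<Rightarrow> real" where
  "rderiv f x = (THE D. (f has_real_derivative D) (at_right x))"

definition Dop :: "real \<Rightarrow> (real \<Rightarrow> real) \<Rightarrow> real \<Rightarrow> real" where
  "Dop eta f x = exp (eta * x) * rderiv (\<lambda>y. exp (- eta * y) * f y) x"

definition monotone_intv :: "real set \<Rightarrow> (real \<Rightarrow> real) \<Rightarrow> bool" where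
  "monotone_intv S f \<longleftrightarrow> mono_on S f \<or> antimono_on S f"

end

theory Submission
  imports Defs
begin

text \<open>Write \<open>Z\<close> for \<open>zak_half (expB \<Lambda>)\<close>. It is antiperiodic, and prepending a node \<open>l\<close> to
  \<open>\<Lambda>\<close> acts on it by the window operator \<open>conv_echi l\<close>, which maps \<open>g\<close> to the function
  x |-> int_0^1 e^(l t) g (x - t) dt. For antiperiodic \<open>g\<close> the derivative of \<open>conv_echi l g\<close> is
  \<open>l * conv_echi l g + (1 + exp l) * g\<close>; by commutativity of convolution this gives
  D_eta Z = (1 + e^eta) Z_eta, where Z_eta is the Zak transform for \<open>\<Lambda>\<close> with one copy of eta removed.
  This reduces the second claim to the first.

  The derivative of \<open>Z\<close> is again antiperiodic, so it suffices that it is nonnegative on a single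
  unit interval: on the k-th translate of that interval it has the sign (-1)^k, so \<open>Z\<close> is monotone
  there. Integration by parts shows that prepending \<open>l\<close> applies \<open>conv_echi l\<close> to the derivative
  as well, and \<open>conv_echi l\<close> preserves nonnegativity on some unit interval: if h >= 0 on [a, a + 1),
  then e^(-l x) (conv_echi l h) x is nondecreasing there and is multiplied by -e^(-l) under
  x |-> x + 1, so it changes sign only once per period. Induction on the length of \<open>\<Lambda>\<close> leaves an
  explicit computation for two nodes; for a single node, \<open>Z\<close> is +/- e^(l x) on each [k, k + 1).\<close>

section \<open>Piecewise continuous functions and indefinite integrals\<close>

definition piecewise_continuous_Z :: "(real \<Rightarrow> real) \<Rightarrow> bool" where
  "piecewise_continuous_Z g \<longleftrightarrow> (\<forall>k::int. \<exists>h. continuous_on {of_int k..of_int k + 1} h \<and>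
      (\<forall>x\<in>{of_int k..<of_int k + 1}. g x = h x))"

lemma piecewise_continuous_Z_integrable:
  assumes "piecewise_continuous_Z g" shows "g integrable_on {a..b}"
proof -
  have unit: "g integrable_on {of_int k..of_int k + 1}" for k :: int
  proof -
    obtain h where "continuous_on {of_int k..of_int k + 1} h" "\<forall>x\<in>{of_int k..<of_int k + 1}. g x = h x"
      using assms unfolding piecewise_continuous_Z_def by blast
    then show ?thesis
      by (intro integrable_spike_finite[of "{of_int k + 1}" _ g h]) (auto intro: integrable_continuous_interval)
  qed
  have range: "g integrable_on {of_int m..of_int m + real n}" for m :: int and n :: nat
  proof (induction n)
    case 0 then show ?case using integrable_on_refl[of g "of_int m"] by (simp add: cbox_interval)
  next
    case (Suc n)
    have "g integrable_on {of_int m + real n..of_int m + real n + 1}"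
      using unit[of "m + int n"] by simp
    then have "g integrable_on {of_int m..of_int m + real n + 1}"
      by (rule Henstock_Kurzweil_Integration.integrable_combine[OF _ _ Suc.IH, rotated 2]) auto
    then show ?case by (simp add: ac_simps)
  qed
  show ?thesis
  proof (cases "a \<le> b")
    case True
    have "{a..b} \<subseteq> {of_int \<lfloor>a\<rfloor>..of_int \<lfloor>a\<rfloor> + real (nat (\<lceil>b\<rceil> - \<lfloor>a\<rfloor>))}"
      using True by auto linarith+
    then show ?thesis by (rule integrable_on_subinterval[OF range])
  qed (simp add: integrable_on_empty)
qed

lemma piecewise_continuous_Z_if_continuous: "continuous_on UNIV g \<Longrightarrow> piecewise_continuous_Z g"
  unfolding piecewise_continuous_Z_def by (metis continuous_on_subset subset_UNIV)

lemma piecewise_continuous_Z_add: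
  assumes "piecewise_continuous_Z f" "piecewise_continuous_Z g"
  shows "piecewise_continuous_Z (\<lambda>x. f x + g x)"
  unfolding piecewise_continuous_Z_def
proof
  fix k :: int
  obtain h1 h2 where "continuous_on {of_int k..of_int k + 1} h1" "\<forall>x\<in>{of_int k..<of_int k + 1}. f x = h1 x"
    "continuous_on {of_int k..of_int k + 1} h2" "\<forall>x\<in>{of_int k..<of_int k + 1}. g x = h2 x"
    using assms unfolding piecewise_continuous_Z_def by meson
  then show "\<exists>h. continuous_on {of_int k..of_int k + 1} h \<and> (\<forall>x\<in>{of_int k..<of_int k + 1}. f x + g x = h x)"
    by (intro exI[of _ "\<lambda>x. h1 x + h2 x"]) (auto intro: continuous_on_add)
qed

lemma piecewise_continuous_Z_mult:
  assumes "continuous_on UNIV c" "piecewise_continuous_Z g"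
  shows "piecewise_continuous_Z (\<lambda>x. c x * g x)"
  unfolding piecewise_continuous_Z_def
proof
  fix k :: int
  obtain h where "continuous_on {of_int k..of_int k + 1} h" "\<forall>x\<in>{of_int k..<of_int k + 1}. g x = h x"
    using assms(2) unfolding piecewise_continuous_Z_def by meson
  moreover have "continuous_on {of_int k..of_int k + 1} c"
    using assms(1) by (rule continuous_on_subset) simp
  ultimately show "\<exists>h. continuous_on {of_int k..of_int k + 1} h \<and> (\<forall>x\<in>{of_int k..<of_int k + 1}. c x * g x = h x)"
    by (intro exI[of _ "\<lambda>x. c x * h x"]) (auto intro: continuous_on_mult)
qed

lemma piecewise_continuous_Z_cmult: "piecewise_continuous_Z g \<Longrightarrow> piecewise_continuous_Z (\<lambda>x. a * g x)"
  using piecewise_continuous_Z_mult[of "\<lambda>_. a" g] by simp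

lemma piecewise_continuous_Z_exp_mult:
  "piecewise_continuous_Z g \<Longrightarrow> piecewise_continuous_Z (\<lambda>x. exp (a * x) * g x)"
  by (rule piecewise_continuous_Z_mult) (intro continuous_intros)

lemma piecewise_continuous_Z_continuous_at_right:
  assumes "piecewise_continuous_Z g" shows "continuous (at_right x) g"
proof -
  define k where "k = \<lfloor>x\<rfloor>"
  obtain h where h: "continuous_on {of_int k..of_int k + 1} h" "\<forall>y\<in>{of_int k..<of_int k + 1}. g y = h y"
    using assms unfolding piecewise_continuous_Z_def by blast
  have x: "x \<in> {of_int k..<of_int k + 1}" using floor_correct[of x] unfolding k_def by auto
  have "continuous (at x within {of_int k..of_int k + 1}) h"
    using h(1) x by (simp add: continuous_on_eq_continuous_within)
  then have "continuous (at x within {x..<of_int k + 1}) h"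
    by (rule continuous_within_subset) (use x in auto)
  then have "continuous (at x within {x..<of_int k + 1}) g"
    by (rule continuous_transform_within[where \<delta>=1]) (use x h(2) in auto)
  moreover have "at x within {x..<of_int k + 1} = at_right x"
    using x by (intro at_within_nhd[where S="{..<of_int k + 1}"]) auto
  ultimately show ?thesis by simp
qed

lemma piecewise_continuous_Z_isCont:
  assumes "piecewise_continuous_Z g" "x \<notin> \<int>" shows "isCont g x"
proof -
  define k where "k = \<lfloor>x\<rfloor>"
  obtain h where h: "continuous_on {of_int k..of_int k + 1} h" "\<forall>y\<in>{of_int k..<of_int k + 1}. g y = h y"
    using assms unfolding piecewise_continuous_Z_def by blast
  have "of_int k \<le> x" "x < of_int k + 1" unfolding k_def by linarith+
  moreover have "of_int k \<noteq> x" using assms(2) by (metis Ints_of_int)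
  ultimately have x: "x \<in> {of_int k<..<of_int k + 1}" by auto
  have "isCont h x"
    by (rule continuous_on_interior[OF h(1)]) (use x in simp)
  then show ?thesis
    by (rule continuous_transform_within[where \<delta>="min (x - k) (k + 1 - x)"])
       (use x h(2) in \<open>auto simp: dist_real_def abs_less_iff\<close>)
qed

definition is_indefinite_integral :: "(real \<Rightarrow> real) \<Rightarrow> (real \<Rightarrow> real) \<Rightarrow> bool" where
  "is_indefinite_integral F h \<longleftrightarrow> (\<forall>x y. x \<le> y \<longrightarrow> F y - F x = integral {x..y} h)"

lemma is_indefinite_integralD:
  "is_indefinite_integral F h \<Longrightarrow> a \<le> y \<Longrightarrow> F y = F a + integral {a..y} h"
  unfolding is_indefinite_integral_def by (metis add.commute diff_add_cancel)

lemma is_indefinite_integral_deriv: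
  assumes "is_indefinite_integral F h" "\<And>a b. h integrable_on {a..b}" "isCont h x"
  shows "(F has_real_derivative h x) (at x)"
proof -
  have "((\<lambda>u. integral {x - 1..u} h) has_vector_derivative h x) (at x within {x - 1..x + 1} - {})"
    by (rule integral_has_vector_derivative_continuous_at[OF assms(2)])
       (use assms(3) in \<open>auto intro: continuous_at_imp_continuous_at_within\<close>)
  moreover have "at x within {x - 1..x + 1} = at x" by (rule at_within_Icc_at) auto
  ultimately have "((\<lambda>u. integral {x - 1..u} h) has_real_derivative h x) (at x)"
    by (simp add: has_real_derivative_iff_has_vector_derivative)
  then have d: "((\<lambda>u. F (x - 1) + integral {x - 1..u} h) has_real_derivative h x) (at x)"
    by (rule DERIV_add[OF DERIV_const, simplified])
  have eq: "F (x - 1) + integral {x - 1..u} h = F u" if "u \<in> {x - 1<..<x + 1}" for u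
    using is_indefinite_integralD[OF assms(1), of "x - 1" u] that by simp
  show ?thesis
    by (rule has_field_derivative_transform_within_open[OF d open_greaterThanLessThan _ eq]) auto
qed

lemma is_indefinite_integral_deriv_right:
  assumes "is_indefinite_integral F h" "\<And>a b. h integrable_on {a..b}" "continuous (at_right x) h"
  shows "(F has_real_derivative h x) (at_right x)"
proof -
  have right: "at x within {x..x + 1} = at_right x" by (rule at_within_Icc_at_right) simp
  have "((\<lambda>u. integral {x..u} h) has_vector_derivative h x) (at x within {x..x + 1} - {})"
    by (rule integral_has_vector_derivative_continuous_at[OF assms(2)]) (use assms(3) right in auto)
  then have "((\<lambda>u. integral {x..u} h) has_real_derivative h x) (at x within {x..x + 1})"
    by (simp add: has_real_derivative_iff_has_vector_derivative)
  then have "((\<lambda>u. F x + integral {x..u} h) has_real_derivative h x) (at x within {x..x + 1})"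
    by (rule DERIV_add[OF DERIV_const, simplified])
  then have "(F has_real_derivative h x) (at x within {x..x + 1})"
    by (rule has_field_derivative_transform_within[where d=1])
       (use is_indefinite_integralD[OF assms(1)] in auto)
  then show ?thesis using right by simp
qed

lemma finite_Ints_Icc: "finite {z \<in> {a..b::real}. z \<in> \<int>}"
proof -
  have "{z \<in> {a..b::real}. z \<in> \<int>} \<subseteq> of_int ` {\<lfloor>a\<rfloor>..\<lceil>b\<rceil>}"
    by (auto elim!: Ints_cases simp: floor_le_iff le_ceiling_iff)
  then show ?thesis by (rule finite_subset) auto
qed

lemma is_indefinite_integral_if_deriv:
  assumes "continuous_on UNIV F" "\<And>x. x \<notin> \<int> \<Longrightarrow> (F has_real_derivative h x) (at x)"
  shows "is_indefinite_integral F h"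
  unfolding is_indefinite_integral_def
proof (intro allI impI)
  fix x y :: real assume "x \<le> y"
  have "(h has_integral F y - F x) {x..y}"
  proof (rule fundamental_theorem_of_calculus_interior_strong[OF finite_Ints_Icc[of x y] \<open>x \<le> y\<close>])
    show "continuous_on {x..y} F" using assms(1) by (rule continuous_on_subset) simp
  qed (use assms(2) in \<open>auto simp: has_real_derivative_iff_has_vector_derivative\<close>)
  then show "F y - F x = integral {x..y} h" by (simp add: integral_unique)
qed

section \<open>Antiperiodic functions and monotonicity\<close>

definition antiperiodic :: "(real \<Rightarrow> real) \<Rightarrow> bool" where
  "antiperiodic g \<longleftrightarrow> (\<forall>x. g (x + 1) = - g x)"

lemma antiperiodic_diff_one: "antiperiodic g \<Longrightarrow> g (x - 1) = - g x"
  unfolding antiperiodic_def by (metis diff_add_cancel minus_minus)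

lemma antiperiodic_add_of_int:
  assumes "antiperiodic g" shows "g (x + of_int k) = (if even k then g x else - g x)"
proof (induction k rule: int_induct[where k=0])
  case (step1 i)
  have "g (x + of_int (i + 1)) = - g (x + of_int i)"
    using assms unfolding antiperiodic_def by (metis add.assoc of_int_add of_int_1)
  then show ?case using step1 by auto
next
  case (step2 i)
  have "g (x + of_int i) = - g (x + of_int (i - 1))"
    using assms unfolding antiperiodic_def by (metis diff_add_cancel add.assoc of_int_add of_int_1)
  then show ?case using step2 by (auto split: if_splits)
qed simp

lemma antiperiodic_linear:
  "antiperiodic f \<Longrightarrow> antiperiodic g \<Longrightarrow> antiperiodic (\<lambda>x. a * f x + b * g x)"
  unfolding antiperiodic_def by (simp add: algebra_simps)

lemma antiperiodic_eqI:
  assumes "antiperiodic f" "antiperiodic g" "\<And>x. x \<in> {0..<1} \<Longrightarrow> f x = g x"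
  shows "f = g"
proof (rule ext)
  fix x :: real
  have "x - of_int \<lfloor>x\<rfloor> \<in> {0..<1}" by simp linarith
  then show "f x = g x"
    using antiperiodic_add_of_int[OF assms(1), of "x - of_int \<lfloor>x\<rfloor>" "\<lfloor>x\<rfloor>"]
      antiperiodic_add_of_int[OF assms(2), of "x - of_int \<lfloor>x\<rfloor>" "\<lfloor>x\<rfloor>"] assms(3) by simp
qed

lemma antiperiodic_piecewise_continuous_Z:
  assumes "antiperiodic g" "continuous_on {0..1} h" "\<And>x. x \<in> {0..<1} \<Longrightarrow> g x = h x"
  shows "piecewise_continuous_Z g"
  unfolding piecewise_continuous_Z_def
proof
  fix k :: int
  have "continuous_on {of_int k..of_int k + 1} (\<lambda>y. h (y - of_int k))"
    by (rule continuous_on_compose2[OF assms(2)]) (auto intro!: continuous_intros)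
  then have "continuous_on {of_int k..of_int k + 1} (\<lambda>y. (if even k then 1 else -1) * h (y - of_int k))"
    by (intro continuous_intros)
  moreover have "g y = (if even k then 1 else -1) * h (y - of_int k)" if "y \<in> {of_int k..<of_int k + 1}" for y
    using antiperiodic_add_of_int[OF assms(1), of "y - of_int k" k] assms(3)[of "y - of_int k"] that by auto
  ultimately show "\<exists>h. continuous_on {of_int k..of_int k + 1} h \<and> (\<forall>x\<in>{of_int k..<of_int k + 1}. g x = h x)"
    by blast
qed

lemma monotone_intv_cmult:
  assumes "monotone_intv S f" shows "monotone_intv S (\<lambda>x. c * f x)"
  using assms unfolding monotone_intv_def monotone_on_def
  by (smt (verit) mult_left_mono mult_left_mono_neg)

lemma antiperiodic_monotone_intv_shift:
  assumes "antiperiodic g" "monotone_intv {a..<a + 1} g"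
  shows "monotone_intv {a + of_int k..<a + of_int k + 1} g"
proof -
  let ?T = "{a + of_int k..<a + of_int k + 1}"
  have "mono_on ?T (\<lambda>x. x - of_int k)" by (auto intro: mono_onI)
  moreover have "(\<lambda>x. x - of_int k) ` ?T \<subseteq> {a..<a + 1}" by auto
  ultimately have "monotone_intv ?T (g \<circ> (\<lambda>x. x - of_int k))"
    using assms(2) unfolding monotone_intv_def by (metis monotone_on_o)
  then have "monotone_intv ?T (\<lambda>x. (if even k then 1 else -1) * g (x - of_int k))"
    unfolding o_def by (rule monotone_intv_cmult)
  moreover have "(\<lambda>x. (if even k then 1 else -1) * g (x - of_int k)) = g"
  proof (rule ext)
    fix x show "(if even k then 1 else -1) * g (x - of_int k) = g x"
      using antiperiodic_add_of_int[OF assms(1), of "x - of_int k" k] by simp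
  qed
  ultimately show ?thesis by simp
qed

lemma mono_on_sign_change:
  fixes k :: "real \<Rightarrow> real"
  assumes "continuous_on {a..b} k" "mono_on {a..b} k" "a \<le> b"
  obtains r where "r \<in> {a..b}" "\<And>x. x \<in> {r..<b} \<Longrightarrow> 0 \<le> k x" "\<And>x. x \<in> {a..<r} \<Longrightarrow> k x \<le> 0"
proof (cases "0 \<le> k a")
  case True
  have "0 \<le> k x" if "x \<in> {a..<b}" for x
    using True mono_onD[OF assms(2), of a x] that by auto
  then show ?thesis using assms(3) by (intro that[of a]) auto
next
  case ka: False
  show ?thesis
  proof (cases "k b \<le> 0")
    case True
    have "k x \<le> 0" if "x \<in> {a..<b}" for x
      using True mono_onD[OF assms(2), of x b] that by auto
    then show ?thesis using assms(3) by (intro that[of b]) auto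
  next
    case False
    then obtain r where r: "r \<in> {a..b}" "k r = 0"
      using IVT'[of k a 0 b, OF _ _ assms(3,1)] ka by force
    have "0 \<le> k x" if "x \<in> {r..<b}" for x
      using r mono_onD[OF assms(2), of r x] that by auto
    moreover have "k x \<le> 0" if "x \<in> {a..<r}" for x
      using r mono_onD[OF assms(2), of x r] that by auto
    ultimately show ?thesis using r(1) by (intro that[of r])
  qed
qed

text \<open>If \<open>h\<close> has the sign of \<open>k\<close> and \<open>k\<close> changes sign at \<open>r\<close>, then antiperiodicity makes \<open>h\<close>
  nonnegative on \<open>[r, r + 1)\<close>.\<close>
lemma antiperiodic_nonneg_on_unit_interval_mono:
  assumes "antiperiodic h" "continuous_on {a..a + 1} k" "mono_on {a..a + 1} k"
    "\<And>x. x \<in> {a..<a + 1} \<Longrightarrow> \<exists>w>0. h x = w * k x"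
  shows "\<exists>b. \<forall>x\<in>{b..<b + 1}. 0 \<le> h x"
proof -
  obtain r where r: "r \<in> {a..a + 1}" "\<And>x. x \<in> {r..<a + 1} \<Longrightarrow> 0 \<le> k x"
    "\<And>x. x \<in> {a..<r} \<Longrightarrow> k x \<le> 0"
    using mono_on_sign_change[OF assms(2,3)] by auto
  have "0 \<le> h x" if x: "x \<in> {r..<r + 1}" for x
  proof (cases "x < a + 1")
    case True
    then obtain w where "w > 0" "h x = w * k x" using assms(4)[of x] r(1) x by auto
    then show ?thesis using r(2)[of x] True x by simp
  next
    case False
    then obtain w where "w > 0" "h (x - 1) = w * k (x - 1)" using assms(4)[of "x - 1"] r(1) x by auto
    moreover have "k (x - 1) \<le> 0" using r(3)[of "x - 1"] False x by auto
    ultimately show ?thesis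
      using antiperiodic_diff_one[OF assms(1), of x] mult_nonneg_nonpos[of w "k (x - 1)"] by simp
  qed
  then show ?thesis by blast
qed

lemma antiperiodic_nonneg_on_unit_interval:
  assumes "antiperiodic h" "continuous_on {a..a + 1} k" "monotone_intv {a..a + 1} k"
    "\<And>x. x \<in> {a..<a + 1} \<Longrightarrow> \<exists>w>0. h x = w * k x"
  shows "\<exists>b. \<forall>x\<in>{b..<b + 1}. 0 \<le> h x"
  using assms(3) unfolding monotone_intv_def
proof
  assume "mono_on {a..a + 1} k"
  then show ?thesis using antiperiodic_nonneg_on_unit_interval_mono assms by blast
next
  assume "antimono_on {a..a + 1} k"
  then have "mono_on {a..a + 1} (\<lambda>x. - k x)"
    by (auto intro!: mono_onI dest: monotone_onD)
  moreover have "antiperiodic (\<lambda>x. - h x)" using assms(1) unfolding antiperiodic_def by simp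
  moreover have "continuous_on {a..a + 1} (\<lambda>x. - k x)" using assms(2) by (intro continuous_intros)
  ultimately obtain b where b: "\<forall>x\<in>{b..<b + 1}. 0 \<le> - h x"
    using antiperiodic_nonneg_on_unit_interval_mono[of "\<lambda>x. - h x" a "\<lambda>x. - k x"] assms(4) by force
  have "0 \<le> h x" if "x \<in> {b + 1..<b + 1 + 1}" for x
  proof -
    have "0 \<le> - h (x - 1)" using b that by auto
    then show ?thesis using antiperiodic_diff_one[OF assms(1), of x] by simp
  qed
  then show ?thesis by blast
qed

lemma mono_on_if_nonneg_density:
  assumes "is_indefinite_integral F h" "\<And>a b. h integrable_on {a..b}" "\<And>x. x \<in> S \<Longrightarrow> 0 \<le> h x"
    "is_interval S"
  shows "mono_on S F"
proof (rule mono_onI)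
  fix r t assume rt: "r \<in> S" "t \<in> S" "r \<le> t"
  have "{r..t} \<subseteq> S" using assms(4) rt unfolding is_interval_1 by (meson atLeastAtMost_iff subsetI)
  then have "0 \<le> integral {r..t} h" using assms(2,3) by (intro integral_nonneg) auto
  then show "F r \<le> F t" using is_indefinite_integralD[OF assms(1) rt(3)] by simp
qed

lemma mono_on_Icc_if_mono_on_Ico:
  fixes f :: "real \<Rightarrow> real"
  assumes "continuous_on {a..b} f" "mono_on {a..<b} f"
  shows "mono_on {a..b} f"
proof (rule mono_onI)
  fix x y assume xy: "x \<in> {a..b}" "y \<in> {a..b}" "x \<le> y"
  show "f x \<le> f y"
  proof (cases "y < b \<or> x = y")
    case True
    then show ?thesis using xy mono_onD[OF assms(2), of x y] by auto
  next
    case False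
    then have "y = b" "x < b" using xy by auto
    have "a < b" using \<open>x < b\<close> xy(1) by simp
    then have "(f \<longlongrightarrow> f b) (at_left b)" by (rule continuous_on_Icc_at_leftD[OF assms(1)])
    moreover have "\<forall>\<^sub>F z in at_left b. f x \<le> f z"
      using eventually_at_left_real[OF \<open>x < b\<close>]
      by eventually_elim (use xy mono_onD[OF assms(2), of x] in auto)
    ultimately show ?thesis
      using \<open>y = b\<close> by (auto intro: tendsto_lowerbound)
  qed
qed

section \<open>Convolution with an exponential window\<close>

definition conv_echi :: "real \<Rightarrow> (real \<Rightarrow> real) \<Rightarrow> real \<Rightarrow> real" where
  "conv_echi l g x = integral {0..1} (\<lambda>t. exp (l * t) * g (x - t))"

lemma integral_reflect_unit:
  fixes F :: "real \<Rightarrow> real"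
  shows "integral {0..1} (\<lambda>t. F (x - t)) = integral {x - 1..x} F"
proof -
  have "integral {0..1} (\<lambda>t. F (x - t)) = integral {-0..-(-1)} (\<lambda>t. (F \<circ> (+) x) (-t))" by simp
  also have "\<dots> = integral {-1..0} (F \<circ> (+) x)"
    by (rule Henstock_Kurzweil_Integration.integral_reflect_real)
  also have "\<dots> = integral {-1 + x..0 + x} F" by (rule integral_shift_Icc_real)
  finally show ?thesis by simp
qed

lemma integrable_reflect_unit:
  fixes F :: "real \<Rightarrow> real"
  assumes "F integrable_on {x - 1..x}"
  shows "(\<lambda>t. F (x - t)) integrable_on {0..1}"
proof -
  have "(F \<circ> (+) x) integrable_on {-1..0}"
    using assms integrable_on_shift_Icc_real[of F x "-1" 0] by simp
  then have "(\<lambda>t. (F \<circ> (+) x) (-t)) integrable_on {-0..-(-1)}"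
    by (rule Henstock_Kurzweil_Integration.integrable_reflect_real[THEN iffD2])
  then show ?thesis by simp
qed

lemma exp_shift: "exp (- l * (x - t)) * exp (l * x) = exp (l * t :: real)"
  by (simp add: mult_exp_exp algebra_simps)

lemma conv_echi_integrable:
  assumes "piecewise_continuous_Z g"
  shows "(\<lambda>t. exp (l * t) * g (x - t)) integrable_on {0..1}"
proof -
  have "(\<lambda>u. exp (- l * u) * g u) integrable_on {x - 1..x}"
    by (rule piecewise_continuous_Z_integrable[OF piecewise_continuous_Z_exp_mult[OF assms]])
  then have "(\<lambda>t. exp (- l * (x - t)) * g (x - t) * exp (l * x)) integrable_on {0..1}"
    by (intro integrable_on_mult_left integrable_reflect_unit)
  then show ?thesis by (subst exp_shift[of l x, symmetric]) (simp add: ac_simps)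
qed

lemma conv_echi_window:
  "conv_echi l g x = exp (l * x) * integral {x - 1..x} (\<lambda>u. exp (- l * u) * g u)"
proof -
  have "conv_echi l g x = integral {0..1} (\<lambda>t. exp (- l * (x - t)) * g (x - t)) * exp (l * x)"
    unfolding conv_echi_def by (subst exp_shift[of l x, symmetric]) (simp add: ac_simps)
  then show ?thesis using integral_reflect_unit[of "\<lambda>u. exp (- l * u) * g u" x] by simp
qed

lemma conv_echi_linear:
  assumes "piecewise_continuous_Z f" "piecewise_continuous_Z g"
  shows "conv_echi l (\<lambda>u. a * f u + b * g u) x = a * conv_echi l f x + b * conv_echi l g x"
proof -
  have "conv_echi l (\<lambda>u. a * f u + b * g u) x =
      integral {0..1} (\<lambda>t. a * (exp (l * t) * f (x - t)) + b * (exp (l * t) * g (x - t)))"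
    unfolding conv_echi_def by (simp add: algebra_simps)
  also have "\<dots> = a * conv_echi l f x + b * conv_echi l g x"
    unfolding conv_echi_def using conv_echi_integrable[OF assms(1)] conv_echi_integrable[OF assms(2)]
    by (simp add: integral_add integrable_on_mult_right)
  finally show ?thesis .
qed

lemma isCont_integral_unit_window:
  fixes F :: "real \<Rightarrow> real"
  assumes "\<And>a b. F integrable_on {a..b}" shows "isCont (\<lambda>x. integral {x - 1..x} F) x0"
proof -
  define A where "A = x0 - 2"
  have c: "continuous_on {A..x0 + 1} (\<lambda>x. integral {A..x} F)"
    by (rule indefinite_integral_continuous_1[OF assms])
  have "continuous_on {x0 - 1..x0 + 1} (\<lambda>x. integral {A..x - 1} F)"
    by (rule continuous_on_compose2[OF c]) (auto intro!: continuous_intros simp: A_def)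
  moreover have "continuous_on {x0 - 1..x0 + 1} (\<lambda>x. integral {A..x} F)"
    by (rule continuous_on_subset[OF c]) (auto simp: A_def)
  ultimately have "continuous_on {x0 - 1..x0 + 1} (\<lambda>x. integral {A..x} F - integral {A..x - 1} F)"
    by (intro continuous_intros)
  moreover have "integral {A..x} F - integral {A..x - 1} F = integral {x - 1..x} F"
    if "x \<in> {x0 - 1..x0 + 1}" for x
    using Henstock_Kurzweil_Integration.integral_combine[of A "x - 1" x F] assms that
    by (simp add: A_def)
  ultimately have "continuous_on {x0 - 1..x0 + 1} (\<lambda>x. integral {x - 1..x} F)"
    by (rule continuous_on_eq)
  then show ?thesis by (rule continuous_on_interior) auto
qed

lemma continuous_on_conv_echi:
  assumes "piecewise_continuous_Z g" shows "continuous_on UNIV (conv_echi l g)"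
proof -
  have "isCont (\<lambda>x. exp (l * x) * integral {x - 1..x} (\<lambda>u. exp (- l * u) * g u)) x" for x
    using piecewise_continuous_Z_integrable[OF piecewise_continuous_Z_exp_mult[OF assms]]
    by (intro continuous_intros isCont_integral_unit_window)
  then show ?thesis
    by (simp add: conv_echi_window[abs_def] continuous_at_imp_continuous_on)
qed

lemma piecewise_continuous_Z_conv_echi:
  "piecewise_continuous_Z g \<Longrightarrow> piecewise_continuous_Z (conv_echi l g)"
  by (rule piecewise_continuous_Z_if_continuous[OF continuous_on_conv_echi])

lemma antiperiodic_conv_echi:
  assumes "antiperiodic g" shows "antiperiodic (conv_echi l g)"
proof -
  have "g (x + 1 - t) = - g (x - t)" for x t
    using assms unfolding antiperiodic_def by (metis add.commute add_diff_eq)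
  then show ?thesis unfolding antiperiodic_def conv_echi_def by simp
qed

text \<open>Moving the window \<open>[x - 1, x]\<close> gains the integrand at its right end and loses it at its left
  end, where by antiperiodicity it is \<open>- e\<^sup>l\<close> times its value one step to the right.\<close>
lemma conv_echi_window_indefinite_integral:
  assumes "antiperiodic g" "piecewise_continuous_Z g"
  shows "is_indefinite_integral (\<lambda>x. exp (- l * x) * conv_echi l g x)
           (\<lambda>u. (1 + exp l) * (exp (- l * u) * g u))"
  unfolding is_indefinite_integral_def
proof (intro allI impI)
  fix x y :: real assume "x \<le> y"
  define F where "F = (\<lambda>u. exp (- l * u) * g u)"
  have int: "F integrable_on {a..b}" for a b
    unfolding F_def by (rule piecewise_continuous_Z_integrable[OF piecewise_continuous_Z_exp_mult[OF assms(2)]])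
  have window: "exp (- l * z) * conv_echi l g z = integral {z - 1..z} F" for z
    unfolding conv_echi_window F_def by (simp add: mult_exp_exp)
  have "F (u - 1) = - exp l * F u" for u
    using antiperiodic_diff_one[OF assms(1), of u] unfolding F_def
    by (simp add: mult_exp_exp algebra_simps flip: exp_add)
  then have "integral {x - 1..y - 1} F = - exp l * integral {x..y} F"
    using integral_shift_Icc_real[of x y F "-1"] by (simp add: o_def)
  moreover have "integral {x - 1..x} F + integral {x..y} F = integral {x - 1..y} F"
    "integral {x - 1..y - 1} F + integral {y - 1..y} F = integral {x - 1..y} F"
    using \<open>x \<le> y\<close> by (auto intro: Henstock_Kurzweil_Integration.integral_combine int)
  ultimately have "exp (- l * y) * conv_echi l g y - exp (- l * x) * conv_echi l g x
      = (1 + exp l) * integral {x..y} F"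
    unfolding window by (simp add: algebra_simps)
  then show "exp (- l * y) * conv_echi l g y - exp (- l * x) * conv_echi l g x
      = integral {x..y} (\<lambda>u. (1 + exp l) * (exp (- l * u) * g u))"
    by (simp add: F_def)
qed

lemma exp_mult_exp_minus: "exp (l * x) * (exp (- l * x) * y) = (y :: real)"
  by (simp add: mult.assoc[symmetric] mult_exp_exp)

lemma has_real_derivative_conv_echi:
  assumes "antiperiodic g" "piecewise_continuous_Z g" "isCont g x"
  shows "(conv_echi l g has_real_derivative l * conv_echi l g x + (1 + exp l) * g x) (at x)"
proof -
  have "(\<lambda>u. (1 + exp l) * (exp (- l * u) * g u)) integrable_on {a..b}" for a b
    by (intro piecewise_continuous_Z_integrable piecewise_continuous_Z_cmult
        piecewise_continuous_Z_exp_mult assms(2))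
  then have "((\<lambda>x. exp (- l * x) * conv_echi l g x) has_real_derivative (1 + exp l) * (exp (- l * x) * g x)) (at x)"
    using assms(3)
    by (intro is_indefinite_integral_deriv[OF conv_echi_window_indefinite_integral[OF assms(1,2)]])
       (auto intro!: continuous_intros)
  then have "((\<lambda>x. exp (l * x) * (exp (- l * x) * conv_echi l g x)) has_real_derivative
      exp (l * x) * l * (exp (- l * x) * conv_echi l g x) + (1 + exp l) * (exp (- l * x) * g x) * exp (l * x)) (at x)"
    by (intro DERIV_mult) (auto intro!: derivative_eq_intros)
  moreover have "exp (l * x) * l * (exp (- l * x) * conv_echi l g x) + (1 + exp l) * (exp (- l * x) * g x) * exp (l * x)
      = l * conv_echi l g x + (1 + exp l) * g x"
    using exp_minus_inverse[of "l * x"] by (simp add: algebra_simps)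
  ultimately show ?thesis unfolding exp_mult_exp_minus by simp
qed

lemma conv_echi_indefinite_integral:
  assumes "antiperiodic g" "piecewise_continuous_Z g"
  shows "is_indefinite_integral (conv_echi l g) (\<lambda>x. l * conv_echi l g x + (1 + exp l) * g x)"
  using continuous_on_conv_echi[OF assms(2)]
    has_real_derivative_conv_echi[OF assms piecewise_continuous_Z_isCont[OF assms(2)]]
  by (rule is_indefinite_integral_if_deriv)

text \<open>Integration by parts: \<open>conv_echi l\<close> commutes with differentiation up to the boundary terms,
  which combine to \<open>(1 + e\<^sup>l) g x\<close> by antiperiodicity.\<close>
lemma conv_echi_of_derivative:
  assumes "antiperiodic g" "continuous_on UNIV g" "is_indefinite_integral g k" "piecewise_continuous_Z k"
  shows "conv_echi l k x = l * conv_echi l g x + (1 + exp l) * g x"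
proof -
  define w where "w = (\<lambda>t. exp (l * t) * g (x - t))"
  define w' where "w' = (\<lambda>t. l * (exp (l * t) * g (x - t)) - exp (l * t) * k (x - t))"
  define S where "S = (\<lambda>z. x - z) ` {z \<in> {x - 1..x}. z \<in> \<int>}"
  have "w' t = l * w t - exp (l * t) * k (x - t)" for t unfolding w_def w'_def ..
  have wd: "(w has_vector_derivative w' t) (at t)" if "t \<in> {0<..<1} - S" for t
  proof -
    have "x - t \<notin> \<int>"
    proof
      assume "x - t \<in> \<int>"
      then have "x - (x - t) \<in> S" unfolding S_def using that by (intro imageI) auto
      then show False using that by simp
    qed
    then have "(g has_real_derivative k (x - t)) (at (x - t))"
      by (intro is_indefinite_integral_deriv[OF assms(3)] piecewise_continuous_Z_isCont assms(4)
          piecewise_continuous_Z_integrable)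
    then have "(w has_real_derivative exp (l * t) * l * g (x - t) + exp (l * t) * (k (x - t) * (-1))) (at t)"
      unfolding w_def by (auto intro!: derivative_eq_intros DERIV_chain2[where f=g])
    then show ?thesis unfolding w'_def has_real_derivative_iff_has_vector_derivative[symmetric]
      by (simp add: algebra_simps)
  qed
  have "finite S" unfolding S_def by (intro finite_imageI finite_Ints_Icc)
  have "continuous_on {0..1} w"
    unfolding w_def by (intro continuous_intros continuous_on_compose2[OF assms(2)]) auto
  with wd have "(w' has_integral w 1 - w 0) {0..1}"
    by (intro fundamental_theorem_of_calculus_interior_strong[OF \<open>finite S\<close>]) auto
  moreover have "integral {0..1} w' = l * conv_echi l g x - conv_echi l k x"
    unfolding w'_def conv_echi_def using assms(4) piecewise_continuous_Z_if_continuous[OF assms(2)]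
    by (subst integral_diff) (auto intro!: integrable_on_mult_right conv_echi_integrable)
  moreover have "w 1 - w 0 = - (1 + exp l) * g x"
    unfolding w_def using antiperiodic_diff_one[OF assms(1), of x] by (simp add: algebra_simps)
  ultimately show ?thesis by (simp add: integral_unique algebra_simps)
qed

lemma conv_echi_nonneg_on_unit_interval:
  assumes "antiperiodic h" "piecewise_continuous_Z h" "\<forall>x\<in>{a..<a + 1}. 0 \<le> h x"
  shows "\<exists>b. \<forall>x\<in>{b..<b + 1}. 0 \<le> conv_echi l h x"
proof -
  define \<phi> where "\<phi> = (\<lambda>x. exp (- l * x) * conv_echi l h x)"
  have int: "(\<lambda>u. (1 + exp l) * (exp (- l * u) * h u)) integrable_on {a..b}" for a b
    by (intro piecewise_continuous_Z_integrable piecewise_continuous_Z_cmult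
        piecewise_continuous_Z_exp_mult assms(2))
  have "continuous_on UNIV \<phi>"
    unfolding \<phi>_def using continuous_on_conv_echi[OF assms(2)] by (intro continuous_intros)
  then have cont: "continuous_on {a..a + 1} \<phi>" by (rule continuous_on_subset) simp
  have "mono_on {a..<a + 1} \<phi>"
    unfolding \<phi>_def using assms(3)
    by (intro mono_on_if_nonneg_density[OF conv_echi_window_indefinite_integral[OF assms(1,2)] int])
       auto
  then have "monotone_intv {a..a + 1} \<phi>"
    unfolding monotone_intv_def using mono_on_Icc_if_mono_on_Ico[OF cont] by blast
  moreover have "\<exists>w>0. conv_echi l h x = w * \<phi> x" for x
  proof -
    have "conv_echi l h x = exp (l * x) * \<phi> x" unfolding \<phi>_def exp_mult_exp_minus ..
    then show ?thesis by (intro exI[of _ "exp (l * x)"]) simp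
  qed
  ultimately show ?thesis
    by (intro antiperiodic_nonneg_on_unit_interval[OF antiperiodic_conv_echi[OF assms(1)] cont])
qed

section \<open>Zak transforms of exponential B-splines\<close>

lemma Ico_01_add_of_int_eq_0:
  assumes "x \<in> {0..<1}" "x + of_int k \<in> {0..<1::real}" shows "k = 0"
proof -
  have "(-1::real) < of_int k" "of_int k < (1::real)" using assms by auto
  then show ?thesis by simp
qed

lemma echi_piecewise_continuous_Z: "piecewise_continuous_Z (echi l)"
  unfolding piecewise_continuous_Z_def
proof
  fix k :: int
  show "\<exists>h. continuous_on {of_int k..of_int k + 1} h \<and> (\<forall>x\<in>{of_int k..<of_int k + 1}. echi l x = h x)"
  proof (cases "k = 0")
    case True
    then show ?thesis unfolding echi_def by (intro exI[of _ "\<lambda>x. exp (l * x)"]) (auto intro!: continuous_intros)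
  next
    case False
    have "echi l x = 0" if "x \<in> {of_int k..<of_int k + 1}" for x
      using Ico_01_add_of_int_eq_0[of "x - of_int k" k] that False unfolding echi_def by auto
    then show ?thesis by (intro exI[of _ "\<lambda>_. 0"]) auto
  qed
qed

lemma conv_echi_eq: "conv (echi l) g = conv_echi l g"
proof (rule ext)
  fix y
  have "(\<lambda>t. echi l t * g (y - t)) = (\<lambda>t. if t \<in> {0..<1} then exp (l * t) * g (y - t) else 0)"
    unfolding echi_def by (rule ext) simp
  then have "conv (echi l) g y = integral {0..<1} (\<lambda>t. exp (l * t) * g (y - t))"
    unfolding conv_def by (simp only: Henstock_Kurzweil_Integration.integral_restrict_UNIV)
  also have "\<dots> = integral {0..1} (\<lambda>t. exp (l * t) * g (y - t))"
    by (rule integral_spike_set) (auto intro: negligible_subset[of "{1}"])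
  finally show "conv (echi l) g y = conv_echi l g y" unfolding conv_echi_def .
qed

lemma expB_Cons: "L \<noteq> [] \<Longrightarrow> expB (l # L) = conv_echi l (expB L)"
  by (cases L) (simp_all add: conv_echi_eq)

lemma conv_echi_support:
  assumes "\<And>y. f y \<noteq> 0 \<Longrightarrow> 0 \<le> y \<and> y < n" "conv_echi l f y \<noteq> 0"
  shows "0 \<le> y \<and> y < n + 1"
proof (rule ccontr)
  assume "\<not> (0 \<le> y \<and> y < n + 1)"
  then have zero: "exp (l * t) * f (y - t) = 0" if "t \<in> {0..1}" for t
    using assms(1)[of "y - t"] that by (cases "f (y - t) = 0") auto
  have "conv_echi l f y = 0"
    using Henstock_Kurzweil_Integration.integral_cong[of "{0..1}" "\<lambda>t. exp (l * t) * f (y - t)" "\<lambda>t. 0"] zero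
    unfolding conv_echi_def by simp
  with assms(2) show False by simp
qed

lemma expB_support: "expB L y \<noteq> 0 \<Longrightarrow> 0 \<le> y \<and> y < real (length L)"
proof (induction L arbitrary: y)
  case (Cons l L)
  show ?case
  proof (cases "L = []")
    case True
    then show ?thesis using Cons.prems by (auto simp: echi_def split: if_splits)
  next
    case False
    then show ?thesis
      using conv_echi_support[where f="expB L" and l=l and y=y, OF Cons.IH] Cons.prems by (simp add: expB_Cons)
  qed
qed simp

lemma expB_piecewise_continuous_Z: "L \<noteq> [] \<Longrightarrow> piecewise_continuous_Z (expB L)"
proof (induction L)
  case (Cons l L)
  then show ?case
    by (cases "L = []") (simp_all add: echi_piecewise_continuous_Z expB_Cons piecewise_continuous_Z_conv_echi)
qed simp

lemma zak_half_eq_sum: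
  assumes "\<And>k. k \<notin> K \<Longrightarrow> f (x + of_int k) = 0" "finite K"
  shows "zak_half f x = (\<Sum>k\<in>K. (-1) powi k * f (x + of_int k))"
proof -
  have "zak_half f x = (\<Sum>\<^sub>\<infinity>k\<in>K. (-1) powi k * f (x + of_int k))"
    unfolding zak_half_def by (rule infsum_cong_neutral) (use assms(1) in auto)
  then show ?thesis using assms(2) by simp
qed

lemma antiperiodic_zak_half: "antiperiodic (zak_half f)"
  unfolding antiperiodic_def
proof
  fix x
  have "zak_half f (x + 1) = (\<Sum>\<^sub>\<infinity>k\<in>UNIV. (-1) powi ((k + 1) - 1) * f (x + of_int (k + 1)))"
    unfolding zak_half_def by (simp add: add_ac)
  also have "\<dots> = (\<Sum>\<^sub>\<infinity>j\<in>UNIV. (-1) powi (j - 1) * f (x + of_int j))"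
    by (rule infsum_reindex_bij_betw[of "\<lambda>k. k + 1"]) (auto intro!: bij_betwI[of _ _ _ "\<lambda>j. j - 1"])
  also have "\<dots> = (\<Sum>\<^sub>\<infinity>j\<in>UNIV. - ((-1) powi j * f (x + of_int j)))"
    by (simp add: power_int_diff)
  also have "\<dots> = - zak_half f x" unfolding zak_half_def by (rule infsum_uminus)
  finally show "zak_half f (x + 1) = - zak_half f x" .
qed

text \<open>Both sides are finite sums over the same range of \<open>k\<close>, so sum and integral can be exchanged.\<close>
lemma zak_half_conv_echi:
  assumes "piecewise_continuous_Z f" "\<And>y. f y \<noteq> 0 \<Longrightarrow> 0 \<le> y \<and> y < n"
  shows "zak_half (conv_echi l f) x = conv_echi l (zak_half f) x"
proof -
  define K where "K = {\<lfloor>- x\<rfloor> - 1..\<lceil>n - x\<rceil> + 1}"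
  have "finite K" unfolding K_def by simp
  have outside: "x + of_int k < 0 \<or> n + 1 < x + of_int k" if "k \<notin> K" for k
  proof -
    have "k < \<lfloor>- x\<rfloor> - 1 \<or> \<lceil>n - x\<rceil> + 1 < k" using that unfolding K_def by auto
    then show ?thesis by linarith
  qed
  have "zak_half (conv_echi l f) x = (\<Sum>k\<in>K. (-1) powi k * conv_echi l f (x + of_int k))"
  proof (rule zak_half_eq_sum[OF _ \<open>finite K\<close>])
    fix k assume "k \<notin> K"
    then show "conv_echi l f (x + of_int k) = 0"
      using conv_echi_support[where f=f and n=n, OF assms(2)] outside by fastforce
  qed
  also have "\<dots> = integral {0..1} (\<lambda>t. \<Sum>k\<in>K. (-1) powi k * (exp (l * t) * f (x + of_int k - t)))"
    unfolding conv_echi_def using conv_echi_integrable[OF assms(1)]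
    by (subst integral_sum[OF \<open>finite K\<close>]) (auto intro: integrable_on_mult_right)
  also have "\<dots> = conv_echi l (zak_half f) x"
    unfolding conv_echi_def
  proof (rule Henstock_Kurzweil_Integration.integral_cong)
    fix t :: real assume t: "t \<in> {0..1}"
    have "zak_half f (x - t) = (\<Sum>k\<in>K. (-1) powi k * f (x - t + of_int k))"
    proof (rule zak_half_eq_sum[OF _ \<open>finite K\<close>])
      fix k assume "k \<notin> K"
      then show "f (x - t + of_int k) = 0"
        using assms(2)[of "x - t + of_int k"] outside[of k] t by fastforce
    qed
    then show "(\<Sum>k\<in>K. (-1) powi k * (exp (l * t) * f (x + of_int k - t))) = exp (l * t) * zak_half f (x - t)"
      by (simp add: sum_distrib_left algebra_simps)
  qed
  finally show ?thesis .
qed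

definition zakB :: "real list \<Rightarrow> real \<Rightarrow> real" where
  "zakB \<Lambda> = zak_half (expB \<Lambda>)"

lemma zakB_Nil: "zakB [] x = 0"
  unfolding zakB_def zak_half_def by simp

lemma antiperiodic_zakB: "antiperiodic (zakB \<Lambda>)"
  unfolding zakB_def by (rule antiperiodic_zak_half)

lemma zakB_Cons: "L \<noteq> [] \<Longrightarrow> zakB (l # L) = conv_echi l (zakB L)"
  unfolding zakB_def expB_Cons
  by (rule ext, rule zak_half_conv_echi[OF expB_piecewise_continuous_Z expB_support])

lemma zakB_single:
  assumes "x \<in> {0..<1}" shows "zakB [l] x = exp (l * x)"
proof -
  have "zakB [l] x = (\<Sum>k\<in>{0}. (-1) powi k * echi l (x + of_int k))"
    unfolding zakB_def expB.simps
    by (rule zak_half_eq_sum) (use Ico_01_add_of_int_eq_0[OF assms] in \<open>auto simp: echi_def\<close>)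
  then show ?thesis using assms unfolding echi_def by simp
qed

lemma piecewise_continuous_Z_zakB: "piecewise_continuous_Z (zakB \<Lambda>)"
proof (induction \<Lambda>)
  case Nil
  show ?case by (rule piecewise_continuous_Z_if_continuous) (simp add: zakB_Nil[abs_def])
next
  case (Cons l L)
  show ?case
  proof (cases "L = []")
    case True
    then show ?thesis
      by (intro antiperiodic_piecewise_continuous_Z[OF antiperiodic_zakB, of "\<lambda>x. exp (l * x)"])
         (auto intro!: continuous_intros simp: zakB_single)
  qed (simp add: zakB_Cons piecewise_continuous_Z_conv_echi Cons.IH)
qed

lemma continuous_on_zakB: "L \<noteq> [] \<Longrightarrow> continuous_on UNIV (zakB (l # L))"
  by (simp add: zakB_Cons continuous_on_conv_echi piecewise_continuous_Z_zakB)

definition exp_integral :: "real \<Rightarrow> real \<Rightarrow> real" where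
  "exp_integral c u = integral {0..u} (\<lambda>t. exp (c * t))"

lemma exp_integrable: "(\<lambda>t. exp (c * t)) integrable_on {a..b::real}"
  by (intro integrable_continuous_interval continuous_intros)

lemma exp_integral_diff:
  "0 \<le> u \<Longrightarrow> u \<le> v \<Longrightarrow> exp_integral c v - exp_integral c u = integral {u..v} (\<lambda>t. exp (c * t))"
  unfolding exp_integral_def
  using Henstock_Kurzweil_Integration.integral_combine[of 0 u v "\<lambda>t. exp (c * t)", OF _ _ exp_integrable]
  by simp

lemma mono_on_exp_integral: "mono_on {0..1} (exp_integral c)"
proof (rule mono_onI)
  fix r s :: real assume "r \<in> {0..1}" "s \<in> {0..1}" "r \<le> s"
  moreover have "0 \<le> integral {r..s} (\<lambda>t. exp (c * t))" by (rule integral_nonneg[OF exp_integrable]) simp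
  ultimately show "exp_integral c r \<le> exp_integral c s" using exp_integral_diff[of r s c] by simp
qed

lemma continuous_on_exp_integral: "continuous_on {0..1} (exp_integral c)"
  unfolding exp_integral_def by (rule indefinite_integral_continuous_1[OF exp_integrable])

lemma exp_integral_eq:
  assumes "c \<noteq> 0" "0 \<le> u" shows "exp_integral c u = (exp (c * u) - 1) / c"
proof -
  have "((\<lambda>t. exp (c * t)) has_integral exp (c * u) / c - exp (c * 0) / c) {0..u}"
  proof (rule fundamental_theorem_of_calculus[OF assms(2)])
    fix x assume "x \<in> {0..u}"
    have "((\<lambda>t. exp (c * t) / c) has_real_derivative exp (c * x) * c / c) (at x within {0..u})"
      using assms(1) by (intro derivative_eq_intros) auto
    then show "((\<lambda>t. exp (c * t) / c) has_vector_derivative exp (c * x)) (at x within {0..u})"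
      using assms(1) by (simp add: has_real_derivative_iff_has_vector_derivative[symmetric])
  qed
  then show ?thesis unfolding exp_integral_def by (simp add: integral_unique diff_divide_distrib)
qed

lemma zakB_two:
  assumes x: "x \<in> {0..<1}"
  shows "zakB [a, b] x = exp (b * x) * ((1 + exp b) * exp_integral (a - b) x - exp b * exp_integral (a - b) 1)"
proof -
  have int: "(\<lambda>t. exp (a * t) * zakB [b] (x - t)) integrable_on {0..1}"
    by (rule conv_echi_integrable[OF piecewise_continuous_Z_zakB])
  have "zakB [a, b] x = integral {0..x} (\<lambda>t. exp (a * t) * zakB [b] (x - t))
      + integral {x..1} (\<lambda>t. exp (a * t) * zakB [b] (x - t))"
    using Henstock_Kurzweil_Integration.integral_combine[of 0 x 1, OF _ _ int] x
    by (simp add: zakB_Cons conv_echi_def)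
  also have "integral {0..x} (\<lambda>t. exp (a * t) * zakB [b] (x - t))
      = integral {0..x} (\<lambda>t. exp (b * x) * exp ((a - b) * t))"
  proof (rule Henstock_Kurzweil_Integration.integral_cong)
    fix t assume "t \<in> {0..x}"
    then have "zakB [b] (x - t) = exp (b * (x - t))" using x by (intro zakB_single) auto
    then show "exp (a * t) * zakB [b] (x - t) = exp (b * x) * exp ((a - b) * t)"
      by (simp add: mult_exp_exp algebra_simps)
  qed
  also have "\<dots> = exp (b * x) * exp_integral (a - b) x" unfolding exp_integral_def by simp
  also have "integral {x..1} (\<lambda>t. exp (a * t) * zakB [b] (x - t))
      = integral {x..1} (\<lambda>t. - (exp (b * x) * exp b) * exp ((a - b) * t))"
  proof (rule integral_spike[of "{x}"])
    fix t assume "t \<in> {x..1} - {x}"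
    then have "zakB [b] (x - t) = - exp (b * (x - t + 1))"
      using x antiperiodic_diff_one[OF antiperiodic_zakB[of "[b]"], of "x - t + 1"]
      by (simp add: zakB_single)
    then show "- (exp (b * x) * exp b) * exp ((a - b) * t) = exp (a * t) * zakB [b] (x - t)"
      by (simp add: mult_exp_exp algebra_simps)
  qed simp
  also have "\<dots> = - (exp (b * x) * exp b) * (exp_integral (a - b) 1 - exp_integral (a - b) x)"
    using exp_integral_diff[of x 1 "a - b"] x by simp
  finally show ?thesis by (simp add: algebra_simps)
qed

text \<open>The two-node case of the commutativity of convolution, which makes \<open>zakB [a, b]\<close>
  symmetric in \<open>a\<close> and \<open>b\<close>.\<close>
lemma zakB_two_eq:
  assumes "a \<noteq> b"
  shows "(a - b) * zakB [a, b] x = (1 + exp b) * zakB [a] x - (1 + exp a) * zakB [b] x"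
proof -
  have "(\<lambda>x. (a - b) * zakB [a, b] x) = (\<lambda>x. (1 + exp b) * zakB [a] x - (1 + exp a) * zakB [b] x)"
  proof (rule antiperiodic_eqI)
    show "antiperiodic (\<lambda>x. (a - b) * zakB [a, b] x)"
      using antiperiodic_zakB[of "[a, b]"] unfolding antiperiodic_def by simp
    show "antiperiodic (\<lambda>x. (1 + exp b) * zakB [a] x - (1 + exp a) * zakB [b] x)"
      using antiperiodic_zakB[of "[a]"] antiperiodic_zakB[of "[b]"] unfolding antiperiodic_def
      by (simp add: algebra_simps)
    fix x :: real assume x: "x \<in> {0..<1}"
    define c where "c = a - b"
    define P Q R S where defs: "P = exp (b * x)" "Q = exp (c * x)" "R = exp b" "S = exp c"
    have "c \<noteq> 0" using assms unfolding c_def by simp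
    have "exp_integral c x = (Q - 1) / c" "exp_integral c 1 = (S - 1) / c"
      using exp_integral_eq[OF \<open>c \<noteq> 0\<close>] x unfolding defs by auto
    then have "(a - b) * zakB [a, b] x = c * (P * ((1 + R) * ((Q - 1) / c) - R * ((S - 1) / c)))"
      unfolding zakB_two[OF x] defs c_def by simp
    also have "\<dots> = P * ((1 + R) * (Q - 1) - R * (S - 1))"
      using \<open>c \<noteq> 0\<close> by (simp add: field_simps)
    also have "\<dots> = (1 + R) * (P * Q) - (1 + R * S) * P" by (simp add: algebra_simps)
    also have "\<dots> = (1 + exp b) * zakB [a] x - (1 + exp a) * zakB [b] x"
      unfolding zakB_single[OF x] defs c_def by (simp add: mult_exp_exp algebra_simps)
    finally show "(a - b) * zakB [a, b] x = (1 + exp b) * zakB [a] x - (1 + exp a) * zakB [b] x" .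
  qed
  then show ?thesis by meson
qed

section \<open>Derivatives of the Zak transform\<close>

definition zakB_deriv :: "real \<Rightarrow> real list \<Rightarrow> real \<Rightarrow> real" where
  "zakB_deriv \<eta> \<Lambda> x = \<eta> * zakB \<Lambda> x + (1 + exp \<eta>) * zakB (remove1 \<eta> \<Lambda>) x"

lemma antiperiodic_zakB_deriv: "antiperiodic (zakB_deriv \<eta> \<Lambda>)"
  unfolding zakB_deriv_def[abs_def] by (intro antiperiodic_linear antiperiodic_zakB)

lemma piecewise_continuous_Z_zakB_deriv: "piecewise_continuous_Z (zakB_deriv \<eta> \<Lambda>)"
  unfolding zakB_deriv_def[abs_def]
  by (intro piecewise_continuous_Z_add piecewise_continuous_Z_cmult piecewise_continuous_Z_zakB)

lemma zakB_indefinite_integral_head: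
  "L \<noteq> [] \<Longrightarrow> is_indefinite_integral (zakB (l # L)) (zakB_deriv l (l # L))"
  using conv_echi_indefinite_integral[OF antiperiodic_zakB piecewise_continuous_Z_zakB]
  by (simp add: zakB_Cons zakB_deriv_def[abs_def])

lemma conv_echi_derivative_zakB:
  assumes "L \<noteq> []" "continuous_on UNIV (zakB L)" "is_indefinite_integral (zakB L) h"
    "piecewise_continuous_Z h"
  shows "conv_echi l h = zakB_deriv l (l # L)"
  using conv_echi_of_derivative[OF antiperiodic_zakB assms(2-4)] assms(1)
  by (auto simp: zakB_deriv_def zakB_Cons)

lemma conv_echi_zakB_deriv:
  assumes "L \<noteq> []" "remove1 \<eta> L \<noteq> []" "\<eta> \<noteq> l"
  shows "conv_echi l (zakB_deriv \<eta> L) = zakB_deriv \<eta> (l # L)"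
proof
  fix x
  show "conv_echi l (zakB_deriv \<eta> L) x = zakB_deriv \<eta> (l # L) x"
    unfolding zakB_deriv_def[abs_def]
    using assms by (simp add: conv_echi_linear piecewise_continuous_Z_zakB zakB_Cons)
qed

text \<open>Convolution is commutative, so every node of \<open>\<Lambda>\<close> can play the role of the head node in
  \<open>zakB_indefinite_integral_head\<close>; the two-node case is \<open>zakB_two_eq\<close>.\<close>
lemma zakB_indefinite_integral:
  "L \<noteq> [] \<Longrightarrow> \<eta> \<in> set (l # L) \<Longrightarrow> is_indefinite_integral (zakB (l # L)) (zakB_deriv \<eta> (l # L))"
proof (induction L arbitrary: l)
  case (Cons l1 L)
  show ?case
  proof (cases "\<eta> = l")
    case True
    then show ?thesis using zakB_indefinite_integral_head[of "l1 # L" l] by simp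
  next
    case False
    have "zakB_deriv \<eta> (l # l1 # L) = zakB_deriv l (l # l1 # L)"
    proof (cases "L = []")
      case True
      then have "\<eta> = l1" using Cons.prems False by simp
      then show ?thesis using True False zakB_two_eq[of l l1]
        by (auto simp: zakB_deriv_def algebra_simps)
    next
      case L: False
      have "remove1 \<eta> (l1 # L) \<noteq> []" using L by (cases L) auto
      then have "zakB_deriv \<eta> (l # l1 # L) = conv_echi l (zakB_deriv \<eta> (l1 # L))"
        using False by (simp add: conv_echi_zakB_deriv)
      also have "\<dots> = zakB_deriv l (l # l1 # L)"
        using Cons.IH[OF L] Cons.prems False
        by (intro conv_echi_derivative_zakB continuous_on_zakB L piecewise_continuous_Z_zakB_deriv) auto
      finally show ?thesis .
    qed
    then show ?thesis using zakB_indefinite_integral_head[of "l1 # L" l] by simp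
  qed
qed simp

lemma zakB_deriv_two_nonneg:
  "\<exists>y0. \<forall>x\<in>{y0..<y0 + 1}. 0 \<le> zakB_deriv a [a, b] x"
proof -
  define k where "k = (\<lambda>x. a * (1 + exp b) * exp_integral (a - b) x - a * exp b * exp_integral (a - b) 1 + (1 + exp a))"
  have "continuous_on {0..1} k" unfolding k_def
    by (intro continuous_intros continuous_on_exp_integral)
  moreover have "monotone_intv {0..1} k"
    using monotone_intv_cmult[of "{0..1}" "exp_integral (a - b)" "a * (1 + exp b)"] mono_on_exp_integral
    unfolding k_def monotone_intv_def monotone_on_def by auto
  moreover have "\<exists>w>0. zakB_deriv a [a, b] x = w * k x" if "x \<in> {0..<1}" for x
    using that by (intro exI[of _ "exp (b * x)"]) (simp add: zakB_deriv_def zakB_two zakB_single k_def algebra_simps)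
  ultimately show ?thesis
    by (intro antiperiodic_nonneg_on_unit_interval[OF antiperiodic_zakB_deriv, of 0 k]) auto
qed

lemma zakB_deriv_nonneg_on_unit_interval:
  "L \<noteq> [] \<Longrightarrow> \<exists>y0. \<forall>x\<in>{y0..<y0 + 1}. 0 \<le> zakB_deriv l (l # L) x"
proof (induction L arbitrary: l)
  case (Cons l1 L)
  show ?case
  proof (cases "L = []")
    case True
    then show ?thesis using zakB_deriv_two_nonneg by simp
  next
    case False
    then obtain a where "\<forall>x\<in>{a..<a + 1}. 0 \<le> zakB_deriv l1 (l1 # L) x" using Cons.IH by blast
    then obtain y0 where "\<forall>x\<in>{y0..<y0 + 1}. 0 \<le> conv_echi l (zakB_deriv l1 (l1 # L)) x"
      by (blast dest: conv_echi_nonneg_on_unit_interval[OF antiperiodic_zakB_deriv piecewise_continuous_Z_zakB_deriv])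
    moreover have "conv_echi l (zakB_deriv l1 (l1 # L)) = zakB_deriv l (l # l1 # L)"
      using False
      by (intro conv_echi_derivative_zakB continuous_on_zakB zakB_indefinite_integral_head
          piecewise_continuous_Z_zakB_deriv) auto
    ultimately show ?thesis by auto
  qed
qed simp

lemma monotone_intv_exp: "monotone_intv S (\<lambda>x. exp (l * x))"
proof (cases "0 \<le> l")
  case True
  then have "mono_on S (\<lambda>x. exp (l * x))" by (intro mono_onI) (simp add: mult_left_mono)
  then show ?thesis unfolding monotone_intv_def by blast
next
  case False
  then have "antimono_on S (\<lambda>x. exp (l * x))" by (intro monotone_onI) (simp add: mult_left_mono_neg)
  then show ?thesis unfolding monotone_intv_def by blast
qed

lemma monotone_zakB_unit_interval: "\<exists>x0. monotone_intv {x0..<x0 + 1} (zakB \<Lambda>)"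
proof (cases \<Lambda>)
  case Nil
  then show ?thesis by (simp add: zakB_Nil[abs_def] monotone_intv_def monotone_on_def)
next
  case (Cons l L)
  show ?thesis
  proof (cases "L = []")
    case True
    have "monotone_intv {0..<0 + 1} (\<lambda>x. exp (l * x))" by (rule monotone_intv_exp)
    then have "monotone_intv {0..<0 + 1} (zakB \<Lambda>)"
      using Cons True by (simp add: zakB_single monotone_intv_def monotone_on_def)
    then show ?thesis by blast
  next
    case False
    then obtain y0 where "\<forall>x\<in>{y0..<y0 + 1}. 0 \<le> zakB_deriv l (l # L) x"
      using zakB_deriv_nonneg_on_unit_interval by blast
    then have "mono_on {y0..<y0 + 1} (zakB \<Lambda>)"
      unfolding Cons
      by (intro mono_on_if_nonneg_density[OF zakB_indefinite_integral_head[OF False]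
          piecewise_continuous_Z_integrable[OF piecewise_continuous_Z_zakB_deriv]] is_interval_co)
        auto
    then show ?thesis unfolding monotone_intv_def by blast
  qed
qed

lemma monotone_zakB: "\<exists>x0. \<forall>k::int. monotone_intv {x0 + of_int k..<x0 + of_int k + 1} (zakB \<Lambda>)"
proof -
  obtain x0 where "monotone_intv {x0..<x0 + 1} (zakB \<Lambda>)" using monotone_zakB_unit_interval by blast
  then show ?thesis by (intro exI[of _ x0] allI antiperiodic_monotone_intv_shift antiperiodic_zakB)
qed

lemma rderiv_eqI: "(f has_real_derivative D) (at_right x) \<Longrightarrow> rderiv f x = D"
  unfolding rderiv_def
proof (rule the_equality)
  fix D' assume "(f has_real_derivative D') (at_right x)" "(f has_real_derivative D) (at_right x)"
  then show "D' = D" unfolding has_field_derivative_iff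
    using tendsto_unique[OF trivial_limit_at_right_real] by blast
qed

text \<open>\<open>e\<^sup>-\<^sup>\<eta>\<^sup>y zakB [\<eta>] y\<close> is constant on each \<open>[k, k + 1)\<close>.\<close>
lemma Dop_zakB_single: "Dop \<eta> (zakB [\<eta>]) x = 0"
proof -
  define k where "k = \<lfloor>x\<rfloor>"
  define C where "C = (if even k then 1 else -1) * exp (- \<eta> * of_int k)"
  have x: "of_int k \<le> x" "x < of_int k + 1" unfolding k_def by linarith+
  have const: "C = exp (- \<eta> * y) * zakB [\<eta>] y" if "y \<in> {of_int k..<of_int k + 1}" for y
  proof -
    have "y - of_int k \<in> {0..<1}" using that by auto
    then have "zakB [\<eta>] y = (if even k then 1 else -1) * exp (\<eta> * (y - of_int k))"
      using antiperiodic_add_of_int[OF antiperiodic_zakB[of "[\<eta>]"], of "y - of_int k" k]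
      by (simp add: zakB_single)
    moreover have "exp (- \<eta> * y) * exp (\<eta> * (y - of_int k)) = exp (- \<eta> * of_int k)"
      by (simp add: mult_exp_exp algebra_simps)
    ultimately show ?thesis unfolding C_def by (simp add: algebra_simps)
  qed
  have "((\<lambda>y. exp (- \<eta> * y) * zakB [\<eta>] y) has_real_derivative 0) (at x within {x..of_int k + 1})"
    by (rule has_field_derivative_transform_within[OF DERIV_const[of C], where d="of_int k + 1 - x"])
      (use x const in \<open>auto simp: dist_real_def\<close>)
  moreover have "at x within {x..of_int k + 1} = at_right x" using x by (intro at_within_Icc_at_right) simp
  ultimately show ?thesis unfolding Dop_def by (simp add: rderiv_eqI)
qed

lemma DERIV_exp_minus: "((\<lambda>y. exp (- \<eta> * y)) has_real_derivative exp (- \<eta> * x) * (- \<eta>)) (at_right x)"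
  by (intro derivative_eq_intros) auto

lemma Dop_zakB:
  assumes "\<eta> \<in> set \<Lambda>"
  shows "Dop \<eta> (zakB \<Lambda>) x = (1 + exp \<eta>) * zakB (remove1 \<eta> \<Lambda>) x"
proof -
  obtain l L where \<Lambda>: "\<Lambda> = l # L" using assms by (cases \<Lambda>) auto
  show ?thesis
  proof (cases "L = []")
    case True
    then show ?thesis using assms \<Lambda> by (simp add: Dop_zakB_single zakB_Nil)
  next
    case False
    define h where "h = zakB_deriv \<eta> \<Lambda>"
    have "is_indefinite_integral (zakB \<Lambda>) h"
      unfolding h_def \<Lambda> using False assms \<Lambda> by (intro zakB_indefinite_integral) auto
    then have "(zakB \<Lambda> has_real_derivative h x) (at_right x)"
      by (rule is_indefinite_integral_deriv_right)
        (simp_all add: h_def piecewise_continuous_Z_integrable piecewise_continuous_Z_continuous_at_right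
          piecewise_continuous_Z_zakB_deriv)
    with DERIV_exp_minus have "((\<lambda>y. exp (- \<eta> * y) * zakB \<Lambda> y) has_real_derivative
        exp (- \<eta> * x) * (- \<eta>) * zakB \<Lambda> x + h x * exp (- \<eta> * x)) (at_right x)"
      by (rule DERIV_mult)
    moreover have "exp (- \<eta> * x) * (- \<eta>) * zakB \<Lambda> x + h x * exp (- \<eta> * x)
        = exp (- \<eta> * x) * ((1 + exp \<eta>) * zakB (remove1 \<eta> \<Lambda>) x)"
      unfolding h_def zakB_deriv_def by (simp add: algebra_simps)
    ultimately show ?thesis unfolding Dop_def by (simp add: rderiv_eqI exp_minus_inverse)
  qed
qed

theorem mainTheorem7:
  fixes \<Lambda> :: "real list"
  assumes "\<Lambda> \<noteq> []"
  shows "(\<exists>x0::real. \<forall>k::int.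
            monotone_intv {x0 + of_int k ..< x0 + of_int k + 1} (zak_half (expB \<Lambda>)))
       \<and> (\<forall>\<eta>\<in>set \<Lambda>. \<exists>y0::real. \<forall>k::int.
            monotone_intv {y0 + of_int k ..< y0 + of_int k + 1} (Dop \<eta> (zak_half (expB \<Lambda>))))"
proof
  show "\<exists>x0. \<forall>k::int. monotone_intv {x0 + of_int k..<x0 + of_int k + 1} (zak_half (expB \<Lambda>))"
    using monotone_zakB unfolding zakB_def .
  show "\<forall>\<eta>\<in>set \<Lambda>. \<exists>y0. \<forall>k::int.
      monotone_intv {y0 + of_int k..<y0 + of_int k + 1} (Dop \<eta> (zak_half (expB \<Lambda>)))"
  proof
    fix \<eta> assume "\<eta> \<in> set \<Lambda>"
    then have "Dop \<eta> (zakB \<Lambda>) = (\<lambda>x. (1 + exp \<eta>) * zakB (remove1 \<eta> \<Lambda>) x)"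
      by (intro ext Dop_zakB)
    moreover obtain y0 where "\<forall>k::int. monotone_intv {y0 + of_int k..<y0 + of_int k + 1} (zakB (remove1 \<eta> \<Lambda>))"
      using monotone_zakB by blast
    ultimately show "\<exists>y0. \<forall>k::int. monotone_intv {y0 + of_int k..<y0 + of_int k + 1} (Dop \<eta> (zak_half (expB \<Lambda>)))"
      unfolding zakB_def[symmetric] by (intro exI[of _ y0]) (simp add: monotone_intv_cmult)
  qed
qed

end
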